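(* Let $p\geq 1$, $\vec n\in\mathbb N_0^p$, $N\in\mathbb N_0$ with $|\vec n|\le N$, and let $\alpha_1,\dots,\alpha_p,\beta,x\in\mathbb R$ be such that all Pochhammer symbols appearing in denominators below are nonzero. Then $$\sum_{l_1=0}^{n_1}\cdots\sum_{l_p=0}^{n_p}\frac{(-N)_{l_1+\cdots+l_p}(x)_{l_1+\cdots+l_p}}{(x+\beta+2)_{l_1+\cdots+l_p}}C^{l_1,\dots,l_p}_{\vec n}=\frac{(\beta+2)_{|\vec n|-1}(-N)_{|\vec n|}}{(x+\beta+2)_{|\vec n|}\prod_{q=1}^p(\alpha_q+\beta+|\vec n|+1)_{n_q}}\Big((x+\beta+|\vec n|+1)\prod_{q=1}^p(\alpha_q-x+1)_{n_q}-x\prod_{q=1}^p(\alpha_q-x)_{n_q}\Big).$$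
   Context: $(a)_m=a(a+1)\cdots(a+m-1)$, $(a)_0=1$, and for $m\ge1$, $(a)_{m-1}$ is as usual; $|\vec n|=n_1+\cdots+n_p$. The coefficients are $$C^{l_1,\dots,l_p}_{\vec n}=\frac{(-N)_{|\vec n|}}{(-N)_{l_1+\cdots+l_p}}\prod_{i=1}^p\frac{(\alpha_i+1)_{n_i}}{(\alpha_i+\beta+|\vec n|+1)_{n_i}}\frac{(-n_i)_{l_i}}{l_i!}\frac{(\alpha_i+\beta+\sum_{k=1}^i n_k+1)_{\sum_{j=i}^p l_j}}{(\alpha_i+1)_{\sum_{j=i}^p l_j}}\prod_{i=1}^{p-1}\frac{(\alpha_i+n_i+1)_{\sum_{j=i+1}^p l_j}}{(\alpha_i+\beta+\sum_{k=1}^i n_k+1)_{\sum_{j=i+1}^p l_j}}.$$ *)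

theory Defs
  imports Complex_Main
begin

text \<open>Multi-indices are functions nat => nat, with components indexed by 1..p.
  The summation range of the theorem: all l with 0 <= l_i <= n_i for i in 1..p
  (and l_i = 0 outside 1..p, so the set is finite).\<close>
definition lbox :: "nat \<Rightarrow> (nat \<Rightarrow> nat) \<Rightarrow> (nat \<Rightarrow> nat) set" where
  "lbox p n = {l. (\<forall>i\<in>{1..p}. l i \<le> n i) \<and> (\<forall>i. i \<notin> {1..p} \<longrightarrow> l i = 0)}"

definition absn :: "nat \<Rightarrow> (nat \<Rightarrow> nat) \<Rightarrow> nat" where
  "absn p n = (\<Sum>i=1..p. n i)"

definition Ccoef :: "nat \<Rightarrow> nat \<Rightarrow> (nat \<Rightarrow> real) \<Rightarrow> real \<Rightarrow> (nat \<Rightarrow> nat) \<Rightarrow> (nat \<Rightarrow> nat) \<Rightarrow> real" where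
  "Ccoef p N \<alpha> \<beta> n l =
     pochhammer (- real N) (\<Sum>i=1..p. n i) / pochhammer (- real N) (\<Sum>i=1..p. l i)
   * (\<Prod>i=1..p.
        pochhammer (\<alpha> i + 1) (n i) / pochhammer (\<alpha> i + \<beta> + real (\<Sum>k=1..p. n k) + 1) (n i)
      * (pochhammer (- real (n i)) (l i) / fact (l i))
      * (pochhammer (\<alpha> i + \<beta> + real (\<Sum>k=1..i. n k) + 1) (\<Sum>j=i..p. l j)
         / pochhammer (\<alpha> i + 1) (\<Sum>j=i..p. l j)))
   * (\<Prod>i=1..p-1.
        pochhammer (\<alpha> i + real (n i) + 1) (\<Sum>j=i+1..p. l j)
        / pochhammer (\<alpha> i + \<beta> + real (\<Sum>k=1..i. n k) + 1) (\<Sum>j=i+1..p. l j))"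

end

theory Submission
  imports Defs "HOL-Computational_Algebra.Formal_Power_Series"
begin

(* Write C^l_n as a factor independent of l times a product K(l) over the coordinates.
   Summing first over l_1 with s = l_2 + ... + l_p fixed gives a balanced terminating 3F2,
   evaluated by the Pfaff-Saalschuetz formula, and what remains is a sum of the same shape in
   p - 1 variables with beta replaced by beta + n_1. By induction on p,
     sum_l (x)_|l| / (x+beta+1)_|l| * K(l) = (beta+1)_|n| / (x+beta+1)_|n| * prod_q (alpha_q-x+1)_(n_q).
   The denominator (x+beta+2)_L of the theorem is reduced to this case by the partial fraction
     (beta+1) (x)_L / (x+beta+2)_L = (x+beta+1) (x)_L / (x+beta+1)_L - x (x+1)_L / (x+beta+2)_L,
   valid for beta <> -1 and x + beta <> -1; these exceptional values of beta are removed by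
   continuity in beta. *)

section \<open>Terminating hypergeometric summations\<close>

lemma pochhammer_minus_of_nat_div_fact:
  "pochhammer (- of_nat n) k / fact k = (-1) ^ k * (of_nat (n choose k) :: 'a::field_char_0)"
  by (simp add: binomial_gbinomial gbinomial_pochhammer)

lemma chu_vandermonde:
  fixes a c :: "'a::field_char_0"
  assumes "pochhammer c m \<noteq> 0"
  shows "(\<Sum>i\<le>m. (-1) ^ i * of_nat (m choose i) * pochhammer a i / pochhammer c i)
       = pochhammer (c - a) m / pochhammer c m"
proof -
  have "\<forall>i\<in>{0..<m}. c \<noteq> - of_nat i"
    using assms by (auto simp: pochhammer_eq_0_iff)
  moreover have "pochhammer (- of_nat m) i = (-1) ^ i * of_nat (m choose i) * (fact i :: 'a)" for i
    using pochhammer_minus_of_nat_div_fact[of m i, where 'a='a] by (simp add: field_simps)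
  ultimately show ?thesis
    using Vandermonde_pochhammer[of m c a] by (simp add: atMost_atLeast0 mult_ac)
qed

lemma chu_vandermonde_upto:
  fixes a c :: "'a::field_char_0"
  assumes "pochhammer c n \<noteq> 0" and "m \<le> n"
  shows "pochhammer (c - a) m / pochhammer c m
       = (\<Sum>i\<le>n. (-1) ^ i * of_nat (m choose i) * pochhammer a i / pochhammer c i)"
proof -
  have "pochhammer c m \<noteq> 0"
    using assms pochhammer_neq_0_mono by blast
  then have "pochhammer (c - a) m / pochhammer c m
      = (\<Sum>i\<le>m. (-1) ^ i * of_nat (m choose i) * pochhammer a i / pochhammer c i)"
    by (rule chu_vandermonde[symmetric])
  also have "\<dots> = (\<Sum>i\<le>n. (-1) ^ i * of_nat (m choose i) * pochhammer a i / pochhammer c i)"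
    using assms(2) by (intro sum.mono_neutral_left) (auto simp: binomial_eq_0)
  finally show ?thesis .
qed

lemma sum_binomial_binomial_reindex:
  fixes f :: "nat \<Rightarrow> 'a::comm_ring_1"
  assumes "j \<le> n"
  shows "(\<Sum>l\<le>n. (-1) ^ (l + j) * of_nat (n choose l) * of_nat (l choose j) * f l)
       = of_nat (n choose j) * (\<Sum>i\<le>n - j. (-1) ^ i * of_nat ((n - j) choose i) * f (j + i))"
proof -
  have "(\<Sum>l\<le>n. (-1) ^ (l + j) * of_nat (n choose l) * of_nat (l choose j) * f l)
      = (\<Sum>l\<in>{j..n}. (-1) ^ (l + j) * of_nat (n choose l) * of_nat (l choose j) * f l)"
    by (rule sum.mono_neutral_right) (auto simp: binomial_eq_0)
  also have "\<dots> = (\<Sum>i\<le>n - j. (-1) ^ (j + i + j) * of_nat (n choose (j + i)) * of_nat ((j + i) choose j) * f (j + i))"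
    using assms by (intro sum.reindex_bij_witness[of _ "\<lambda>i. j + i" "\<lambda>l. l - j"]) auto
  also have "\<dots> = (\<Sum>i\<le>n - j. of_nat (n choose j) * ((-1) ^ i * of_nat ((n - j) choose i) * f (j + i)))"
  proof (rule sum.cong[OF refl])
    fix i assume "i \<in> {..n - j}"
    then have "j + i \<le> n"
      using assms by simp
    then have "(n choose (j + i)) * ((j + i) choose j) = (n choose j) * ((n - j) choose i)"
      using choose_mult[of j "j + i" n] by simp
    then have "of_nat (n choose (j + i)) * of_nat ((j + i) choose j)
             = (of_nat (n choose j) * of_nat ((n - j) choose i) :: 'a)"
      by (metis of_nat_mult)
    moreover have "(-1 :: 'a) ^ (j + i + j) = (-1) ^ i"
      by (simp add: power_add mult.commute mult.left_commute flip: power_mult_distrib)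
    ultimately show "(-1) ^ (j + i + j) * of_nat (n choose (j + i)) * of_nat ((j + i) choose j) * f (j + i)
        = of_nat (n choose j) * ((-1) ^ i * of_nat ((n - j) choose i) * f (j + i))"
      by (simp add: mult_ac)
  qed
  finally show ?thesis by (simp add: sum_distrib_left)
qed

lemma sum_binomial_pochhammer_ratio_tail:
  fixes v w :: "'a::field_char_0"
  assumes "j \<le> n" and "pochhammer w n \<noteq> 0"
  shows "(\<Sum>i\<le>n - j. (-1) ^ i * of_nat ((n - j) choose i) * (pochhammer v (j + i) / pochhammer w (j + i)))
       = pochhammer v j * pochhammer (w - v) (n - j) / pochhammer w n"
proof -
  have w_split: "pochhammer w n = pochhammer w j * pochhammer (w + of_nat j) (n - j)"
    using pochhammer_product[OF assms(1)] .
  then have "pochhammer (w + of_nat j) (n - j) \<noteq> 0"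
    using assms(2) by auto
  have "(\<Sum>i\<le>n - j. (-1) ^ i * of_nat ((n - j) choose i) * (pochhammer v (j + i) / pochhammer w (j + i)))
      = (\<Sum>i\<le>n - j. pochhammer v j / pochhammer w j * ((-1) ^ i * of_nat ((n - j) choose i)
           * pochhammer (v + of_nat j) i / pochhammer (w + of_nat j) i))"
    by (intro sum.cong) (simp_all add: pochhammer_product')
  also have "\<dots> = pochhammer v j / pochhammer w j
      * (pochhammer (w - v) (n - j) / pochhammer (w + of_nat j) (n - j))"
    unfolding sum_distrib_left[symmetric]
      chu_vandermonde[OF \<open>pochhammer (w + of_nat j) (n - j) \<noteq> 0\<close>] by simp
  finally show ?thesis
    by (simp add: w_split)
qed

lemma pochhammer_reflect_split:
  fixes b :: "'a::field_char_0"
  assumes "j \<le> n"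
  shows "pochhammer (b + 1) j * pochhammer (- b - of_nat n) (n - j) = (-1) ^ n * (-1) ^ j * pochhammer (b + 1) n"
proof -
  have "pochhammer (b + of_nat n - of_nat (n - j) + 1) (n - j) = (-1) ^ (n - j) * pochhammer (- b - of_nat n) (n - j)"
    using pochhammer_minus'[of "b + of_nat n" "n - j"] by simp
  moreover have "b + of_nat n - of_nat (n - j) + 1 = b + 1 + of_nat j"
    using assms by (simp add: of_nat_diff)
  moreover have "(-1) ^ (n - j) = (-1) ^ n * ((-1) ^ j :: 'a)"
    using assms by (simp flip: neg_one_power_add_eq_neg_one_power_diff add: power_add)
  ultimately have "pochhammer (- b - of_nat n) (n - j) = (-1) ^ n * (-1) ^ j * pochhammer (b + 1 + of_nat j) (n - j)"
    by (simp add: power_mult_distrib[symmetric] flip: power_add)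
  then show ?thesis
    using pochhammer_product[OF assms, of "b + 1"] by (simp add: mult_ac)
qed

(* Expand (u)_k / (u+b+1)_k by Chu-Vandermonde, exchange the two sums and evaluate the inner
   one by Chu-Vandermonde again. *)
theorem pfaff_saalschutz:
  fixes u w b :: "'a::field_char_0"
  assumes "pochhammer (u + b + 1) n \<noteq> 0" and "pochhammer w n \<noteq> 0"
  shows "(\<Sum>k\<le>n. pochhammer (- of_nat n) k / fact k * pochhammer u k * pochhammer (w + b + of_nat n) k
            / (pochhammer (u + b + 1) k * pochhammer w k))
       = pochhammer (b + 1) n * pochhammer (w - u) n / (pochhammer (u + b + 1) n * pochhammer w n)"
proof -
  define c where "c = u + b + 1"
  define v where "v = w + b + of_nat n"
  define r where "r = (\<lambda>l. pochhammer v l / pochhammer w l)"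
  have c_ne: "pochhammer c k \<noteq> 0" if "k \<le> n" for k
    using assms(1) that pochhammer_neq_0_mono unfolding c_def by blast
  have u_expand: "pochhammer u l / pochhammer c l
      = (\<Sum>j\<le>n. (-1) ^ j * of_nat (l choose j) * pochhammer (b + 1) j / pochhammer c j)" if "l \<le> n" for l
    using chu_vandermonde_upto[OF c_ne[OF order_refl] that, of "b + 1"] by (simp add: c_def)
  have "(\<Sum>k\<le>n. pochhammer (- of_nat n) k / fact k * pochhammer u k * pochhammer (w + b + of_nat n) k
            / (pochhammer (u + b + 1) k * pochhammer w k))
      = (\<Sum>l\<le>n. (-1) ^ l * of_nat (n choose l) * r l * (pochhammer u l / pochhammer c l))"
    by (simp add: pochhammer_minus_of_nat_div_fact r_def c_def v_def mult_ac)
  also have "\<dots> = (\<Sum>l\<le>n. \<Sum>j\<le>n. pochhammer (b + 1) j / pochhammer c j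
      * ((-1) ^ (l + j) * of_nat (n choose l) * of_nat (l choose j) * r l))"
    by (intro sum.cong refl) (simp add: u_expand sum_distrib_left power_add mult_ac)
  also have "\<dots> = (\<Sum>j\<le>n. pochhammer (b + 1) j / pochhammer c j
      * (\<Sum>l\<le>n. (-1) ^ (l + j) * of_nat (n choose l) * of_nat (l choose j) * r l))"
    by (subst sum.swap) (simp only: sum_distrib_left)
  also have "\<dots> = (\<Sum>j\<le>n. pochhammer (b + 1) j / pochhammer c j
      * (of_nat (n choose j) * (pochhammer v j * pochhammer (- b - of_nat n) (n - j) / pochhammer w n)))"
  proof (intro sum.cong refl arg_cong2[where f = "(*)"])
    fix j assume "j \<in> {..n}"
    then have "j \<le> n" by simp
    moreover have "w - v = - b - of_nat n"
      by (simp add: v_def)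
    ultimately show "(\<Sum>l\<le>n. (-1) ^ (l + j) * of_nat (n choose l) * of_nat (l choose j) * r l)
        = of_nat (n choose j) * (pochhammer v j * pochhammer (- b - of_nat n) (n - j) / pochhammer w n)"
      using sum_binomial_pochhammer_ratio_tail[OF _ assms(2), of j v]
      unfolding sum_binomial_binomial_reindex[OF \<open>j \<le> n\<close>] by (simp add: r_def)
  qed
  also have "\<dots> = (-1) ^ n * pochhammer (b + 1) n / pochhammer w n
      * (\<Sum>j\<le>n. (-1) ^ j * of_nat (n choose j) * pochhammer v j / pochhammer c j)"
  proof -
    have "pochhammer (b + 1) j / pochhammer c j
        * (of_nat (n choose j) * (pochhammer v j * pochhammer (- b - of_nat n) (n - j) / pochhammer w n))
      = (-1) ^ n * pochhammer (b + 1) n / pochhammer w n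
        * ((-1) ^ j * of_nat (n choose j) * pochhammer v j / pochhammer c j)" if "j \<le> n" for j
      using pochhammer_reflect_split[OF that, of b] by (simp add: field_simps)
    then show ?thesis
      by (simp add: sum_distrib_left)
  qed
  also have "\<dots> = (-1) ^ n * pochhammer (b + 1) n / pochhammer w n * (pochhammer (c - v) n / pochhammer c n)"
    using chu_vandermonde[OF c_ne[OF order_refl]] by simp
  also have "pochhammer (c - v) n = (-1) ^ n * pochhammer (w - u) n"
    using pochhammer_minus'[of "u - w" n] by (simp add: c_def v_def algebra_simps)
  finally show ?thesis
    by (simp add: c_def mult_ac flip: power_mult_distrib)
qed

(* The sum over the first coordinate l_1 of a multi-index, with s = l_2 + ... + l_p. *)
lemma pfaff_saalschutz_shifted:
  fixes x \<beta> \<alpha> :: "'a::field_char_0"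
  assumes x_ne: "pochhammer (x + \<beta> + 1) (n + s) \<noteq> 0"
    and \<alpha>_ne: "pochhammer (\<alpha> + 1) (n + s) \<noteq> 0"
    and \<alpha>\<beta>_ne: "pochhammer (\<alpha> + \<beta> + of_nat n + 1) s \<noteq> 0"
  shows "(\<Sum>a\<le>n. pochhammer x (a + s) / pochhammer (x + \<beta> + 1) (a + s)
            * (pochhammer (\<alpha> + 1) n * (pochhammer (- of_nat n) a / fact a)
               * (pochhammer (\<alpha> + \<beta> + of_nat n + 1) (a + s) / pochhammer (\<alpha> + 1) (a + s))
               * (pochhammer (\<alpha> + of_nat n + 1) s / pochhammer (\<alpha> + \<beta> + of_nat n + 1) s)))
       = pochhammer x s / pochhammer (x + \<beta> + of_nat n + 1) s
         * (pochhammer (\<beta> + 1) n * pochhammer (\<alpha> - x + 1) n / pochhammer (x + \<beta> + 1) n)"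
    (is "?lhs = ?rhs")
proof -
  define u where "u = x + of_nat s"
  define w where "w = \<alpha> + 1 + of_nat s"
  have split_s: "pochhammer z (a + s) = pochhammer z s * pochhammer (z + of_nat s) a" for z :: 'a and a
    using pochhammer_product'[of z s a] by (simp add: add.commute)
  have x_split: "pochhammer (x + \<beta> + 1) (n + s) = pochhammer (x + \<beta> + 1) s * pochhammer (u + \<beta> + 1) n"
    by (simp add: split_s u_def algebra_simps)
  have x_split': "pochhammer (x + \<beta> + 1) (n + s) = pochhammer (x + \<beta> + 1) n * pochhammer (x + \<beta> + of_nat n + 1) s"
    by (simp add: pochhammer_product' algebra_simps)
  have \<alpha>_split: "pochhammer (\<alpha> + 1) (n + s) = pochhammer (\<alpha> + 1) s * pochhammer w n"
    by (simp add: split_s w_def algebra_simps)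
  have \<alpha>_split': "pochhammer (\<alpha> + 1) (n + s) = pochhammer (\<alpha> + 1) n * pochhammer (\<alpha> + of_nat n + 1) s"
    by (simp add: pochhammer_product' algebra_simps)
  have u_ne: "pochhammer (u + \<beta> + 1) n \<noteq> 0" and w_ne: "pochhammer w n \<noteq> 0"
    using x_ne \<alpha>_ne x_split \<alpha>_split by auto
  define K where "K = pochhammer x s / pochhammer (x + \<beta> + 1) s
      * (pochhammer (\<alpha> + 1) n * pochhammer (\<alpha> + of_nat n + 1) s / pochhammer (\<alpha> + 1) s)"
  have "?lhs = (\<Sum>a\<le>n. K * (pochhammer (- of_nat n) a / fact a * pochhammer u a * pochhammer (w + \<beta> + of_nat n) a
            / (pochhammer (u + \<beta> + 1) a * pochhammer w a)))"
    by (intro sum.cong refl) (use \<alpha>\<beta>_ne in \<open>simp add: split_s K_def u_def w_def algebra_simps\<close>)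
  also have "\<dots> = K * (pochhammer (\<beta> + 1) n * pochhammer (w - u) n / (pochhammer (u + \<beta> + 1) n * pochhammer w n))"
    by (simp only: sum_distrib_left[symmetric] pfaff_saalschutz[OF u_ne w_ne])
  also have "\<dots> = ?rhs"
  proof -
    have wu: "w - u = \<alpha> - x + 1"
      by (simp add: u_def w_def)
    have "pochhammer (\<alpha> + 1) n * pochhammer (\<alpha> + of_nat n + 1) s = pochhammer (\<alpha> + 1) s * pochhammer w n"
      using \<alpha>_split \<alpha>_split' by simp
    moreover have "pochhammer (x + \<beta> + 1) s * pochhammer (u + \<beta> + 1) n
        = pochhammer (x + \<beta> + 1) n * pochhammer (x + \<beta> + of_nat n + 1) s"
      using x_split x_split' by simp
    moreover have "pochhammer (\<alpha> + 1) s \<noteq> 0" "pochhammer (x + \<beta> + 1) s \<noteq> 0"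
      using \<alpha>_ne x_ne \<alpha>_split x_split by auto
    ultimately show ?thesis
      using w_ne u_ne unfolding K_def wu by (simp add: field_simps)
  qed
  finally show ?thesis .
qed

section \<open>Multi-indices\<close>

lemma sum_atLeast1_Suc_shift: "(\<Sum>k=1..Suc i. g k) = g 1 + (\<Sum>k=1..i. g (Suc k))"
  for g :: "nat \<Rightarrow> 'a::comm_monoid_add"
  by (simp only: sum.atLeast_Suc_atMost[of 1 "Suc i"] sum.shift_bounds_cl_Suc_ivl)

lemma prod_atLeast1_Suc_shift: "(\<Prod>k=1..Suc i. g k) = g 1 * (\<Prod>k=1..i. g (Suc k))"
  for g :: "nat \<Rightarrow> 'a::comm_monoid_mult"
  by (simp only: prod.atLeast_Suc_atMost[of 1 "Suc i"] prod.shift_bounds_cl_Suc_ivl)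

definition index_cons :: "nat \<Rightarrow> (nat \<Rightarrow> nat) \<Rightarrow> nat \<Rightarrow> nat" where
  "index_cons a l = (\<lambda>i. if i = 0 then 0 else if i = 1 then a else l (i - 1))"

lemma index_cons_Suc: "1 \<le> i \<Longrightarrow> index_cons a l (Suc i) = l i"
  by (simp add: index_cons_def)

lemma sum_index_cons_from: "1 \<le> i \<Longrightarrow> (\<Sum>j=Suc i..Suc p. index_cons a l j) = (\<Sum>j=i..p. l j)"
  unfolding sum.shift_bounds_cl_Suc_ivl by (rule sum.cong) (auto simp: index_cons_Suc)

lemma sum_index_cons: "(\<Sum>j=1..Suc p. index_cons a l j) = a + (\<Sum>j=1..p. l j)"
  unfolding sum_atLeast1_Suc_shift by (simp add: index_cons_def)

lemma finite_lbox: "finite (lbox p n)"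
proof (rule finite_subset)
  let ?B = "{l. \<forall>i. (i \<in> {1..p} \<longrightarrow> l i \<in> {0..sum n {1..p}}) \<and> (i \<notin> {1..p} \<longrightarrow> l i = 0)}"
  have "n i \<le> sum n {1..p}" if "i \<in> {1..p}" for i
    using that by (intro member_le_sum) auto
  then show "lbox p n \<subseteq> ?B"
    by (force simp: lbox_def)
  show "finite ?B"
    by (rule finite_set_of_finite_funs) auto
qed

lemma lbox_0: "lbox 0 n = {\<lambda>_. 0}"
  by (auto simp: lbox_def)

lemma sum_le_of_mem_lbox: "l \<in> lbox p n \<Longrightarrow> (\<Sum>i=1..p. l i) \<le> (\<Sum>i=1..p. n i)"
  by (auto simp: lbox_def intro!: sum_mono)

lemma index_cons_mem_lbox:
  assumes "a \<le> n 1" and "l \<in> lbox p (\<lambda>i. n (Suc i))"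
  shows "index_cons a l \<in> lbox (Suc p) n"
proof -
  have "l (i - 1) \<le> n i" if "2 \<le> i" "i \<le> Suc p" for i
    using assms(2) that by (cases i) (auto simp: lbox_def)
  moreover have "l (i - 1) = 0" if "Suc p < i" for i
    using assms(2) that by (cases i) (auto simp: lbox_def)
  ultimately show ?thesis
    using assms by (auto simp: lbox_def index_cons_def)
qed

lemma bij_betw_index_cons_lbox:
  "bij_betw (\<lambda>(a, l). index_cons a l) (SIGMA a:{..n 1}. lbox p (\<lambda>i. n (Suc i))) (lbox (Suc p) n)"
proof (rule bij_betw_byWitness[where f' = "\<lambda>l. (l 1, \<lambda>i. if i = 0 then 0 else l (Suc i))"])
  show "\<forall>x\<in>(SIGMA a:{..n 1}. lbox p (\<lambda>i. n (Suc i))).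
      (\<lambda>l. (l 1, \<lambda>i. if i = 0 then 0 else l (Suc i))) ((\<lambda>(a, l). index_cons a l) x) = x"
    by (auto simp: lbox_def index_cons_def fun_eq_iff)
  show "\<forall>l\<in>lbox (Suc p) n.
      (\<lambda>(a, l). index_cons a l) ((\<lambda>l. (l 1, \<lambda>i. if i = 0 then 0 else l (Suc i))) l) = l"
    by (auto simp: lbox_def index_cons_def fun_eq_iff)
  show "(\<lambda>(a, l). index_cons a l) ` (SIGMA a:{..n 1}. lbox p (\<lambda>i. n (Suc i))) \<subseteq> lbox (Suc p) n"
    using index_cons_mem_lbox by auto
  show "(\<lambda>l. (l 1, \<lambda>i. if i = 0 then 0 else l (Suc i))) ` lbox (Suc p) n
      \<subseteq> (SIGMA a:{..n 1}. lbox p (\<lambda>i. n (Suc i)))"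
    by (auto simp: lbox_def)
qed

lemma sum_lbox_Suc:
  "sum f (lbox (Suc p) n) = (\<Sum>a\<le>n 1. \<Sum>l\<in>lbox p (\<lambda>i. n (Suc i)). f (index_cons a l))"
  by (simp add: sum.reindex_bij_betw[OF bij_betw_index_cons_lbox, symmetric]
      sum.cartesian_product split_def)

section \<open>Summation of the coefficients\<close>

(* Ccoef without its l-independent factors; the second product of Ccoef, over 1..p-1,
   is merged into the first one (its factor at i = p would be 1). *)
definition reduced_Ccoef :: "nat \<Rightarrow> (nat \<Rightarrow> real) \<Rightarrow> real \<Rightarrow> (nat \<Rightarrow> nat) \<Rightarrow> (nat \<Rightarrow> nat) \<Rightarrow> real" where
  "reduced_Ccoef p \<alpha> \<beta> n l =
     (\<Prod>i=1..p.
        pochhammer (\<alpha> i + 1) (n i) * (pochhammer (- real (n i)) (l i) / fact (l i))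
      * (pochhammer (\<alpha> i + \<beta> + real (\<Sum>k=1..i. n k) + 1) (\<Sum>j=i..p. l j)
         / pochhammer (\<alpha> i + 1) (\<Sum>j=i..p. l j))
      * (pochhammer (\<alpha> i + real (n i) + 1) (\<Sum>j=i+1..p. l j)
         / pochhammer (\<alpha> i + \<beta> + real (\<Sum>k=1..i. n k) + 1) (\<Sum>j=i+1..p. l j)))"

lemma Ccoef_eq_reduced_Ccoef:
  "Ccoef p N \<alpha> \<beta> n l
     = pochhammer (- real N) (\<Sum>i=1..p. n i) / pochhammer (- real N) (\<Sum>i=1..p. l i)
       * reduced_Ccoef p \<alpha> \<beta> n l / (\<Prod>i=1..p. pochhammer (\<alpha> i + \<beta> + real (\<Sum>k=1..p. n k) + 1) (n i))"
proof -
  let ?B = "\<lambda>i. pochhammer (\<alpha> i + \<beta> + real (\<Sum>k=1..p. n k) + 1) (n i)"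
  let ?f = "\<lambda>i. pochhammer (\<alpha> i + real (n i) + 1) (\<Sum>j=i+1..p. l j)
         / pochhammer (\<alpha> i + \<beta> + real (\<Sum>k=1..i. n k) + 1) (\<Sum>j=i+1..p. l j)"
  have "(\<Prod>i=1..p-1. ?f i) = (\<Prod>i=1..p. ?f i)"
    by (cases p) (simp_all add: prod.cl_ivl_Suc)
  then show ?thesis
    unfolding Ccoef_def
    by (simp only: reduced_Ccoef_def prod.distrib prod_dividef) (simp add: divide_inverse ac_simps)
qed

lemma reduced_Ccoef_index_cons:
  fixes \<alpha> :: "nat \<Rightarrow> real" and l :: "nat \<Rightarrow> nat" and p :: nat
  defines "S \<equiv> \<Sum>j=1..p. l j"
  shows "reduced_Ccoef (Suc p) \<alpha> \<beta> n (index_cons a l) =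
    pochhammer (\<alpha> 1 + 1) (n 1) * (pochhammer (- real (n 1)) a / fact a)
     * (pochhammer (\<alpha> 1 + \<beta> + real (n 1) + 1) (a + S) / pochhammer (\<alpha> 1 + 1) (a + S))
     * (pochhammer (\<alpha> 1 + real (n 1) + 1) S / pochhammer (\<alpha> 1 + \<beta> + real (n 1) + 1) S)
    * reduced_Ccoef p (\<lambda>i. \<alpha> (Suc i)) (\<beta> + real (n 1)) (\<lambda>i. n (Suc i)) l"
proof -
  define F where "F q \<alpha> \<beta> n l i =
      pochhammer (\<alpha> i + 1) (n i) * (pochhammer (- real (n i)) (l i) / fact (l i))
      * (pochhammer (\<alpha> i + \<beta> + real (\<Sum>k=1..i. n k) + 1) (\<Sum>j=i..q. l j)
         / pochhammer (\<alpha> i + 1) (\<Sum>j=i..q. l j))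
      * (pochhammer (\<alpha> i + real (n i) + 1) (\<Sum>j=i+1..q. l j)
         / pochhammer (\<alpha> i + \<beta> + real (\<Sum>k=1..i. n k) + 1) (\<Sum>j=i+1..q. l j))"
    for q :: nat and \<alpha> :: "nat \<Rightarrow> real" and \<beta> :: real and n l :: "nat \<Rightarrow> nat" and i :: nat
  have F_Suc: "F (Suc p) \<alpha> \<beta> n (index_cons a l) (Suc i)
      = F p (\<lambda>i. \<alpha> (Suc i)) (\<beta> + real (n 1)) (\<lambda>i. n (Suc i)) l i" if "1 \<le> i" for i
  proof -
    have "\<alpha> (Suc i) + \<beta> + real (\<Sum>k=1..Suc i. n k) + 1
        = \<alpha> (Suc i) + (\<beta> + real (n 1)) + real (\<Sum>k=1..i. n (Suc k)) + 1"
      unfolding sum_atLeast1_Suc_shift by simp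
    moreover have "(\<Sum>j=Suc i + 1..Suc p. index_cons a l j) = (\<Sum>j=i+1..p. l j)"
      using sum_index_cons_from[of "Suc i" a l p] by simp
    ultimately show ?thesis
      unfolding F_def index_cons_Suc[OF that] sum_index_cons_from[OF that] by (simp add: add.assoc)
  qed
  have F_1: "F (Suc p) \<alpha> \<beta> n (index_cons a l) 1 =
    pochhammer (\<alpha> 1 + 1) (n 1) * (pochhammer (- real (n 1)) a / fact a)
     * (pochhammer (\<alpha> 1 + \<beta> + real (n 1) + 1) (a + S) / pochhammer (\<alpha> 1 + 1) (a + S))
     * (pochhammer (\<alpha> 1 + real (n 1) + 1) S / pochhammer (\<alpha> 1 + \<beta> + real (n 1) + 1) S)"
  proof -
    have "(\<Sum>j=1+1..Suc p. index_cons a l j) = S"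
      using sum_index_cons_from[of 1 a l p] by (simp add: S_def)
    then show ?thesis
      unfolding F_def sum_index_cons by (simp add: index_cons_def S_def)
  qed
  have reduced_Ccoef_F: "reduced_Ccoef q \<alpha>' \<beta>' n' l' = (\<Prod>i=1..q. F q \<alpha>' \<beta>' n' l' i)" for q \<alpha>' \<beta>' n' l'
    by (simp add: reduced_Ccoef_def F_def)
  have "reduced_Ccoef (Suc p) \<alpha> \<beta> n (index_cons a l)
      = F (Suc p) \<alpha> \<beta> n (index_cons a l) 1 * (\<Prod>i=1..p. F (Suc p) \<alpha> \<beta> n (index_cons a l) (Suc i))"
    by (simp only: reduced_Ccoef_F prod_atLeast1_Suc_shift)
  also have "(\<Prod>i=1..p. F (Suc p) \<alpha> \<beta> n (index_cons a l) (Suc i))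
      = reduced_Ccoef p (\<lambda>i. \<alpha> (Suc i)) (\<beta> + real (n 1)) (\<lambda>i. n (Suc i)) l"
    unfolding reduced_Ccoef_F by (rule prod.cong) (simp_all add: F_Suc)
  finally show ?thesis
    unfolding F_1 .
qed

definition reduced_Ccoef_denoms_nonzero :: "nat \<Rightarrow> (nat \<Rightarrow> real) \<Rightarrow> real \<Rightarrow> (nat \<Rightarrow> nat) \<Rightarrow> bool" where
  "reduced_Ccoef_denoms_nonzero p \<alpha> \<beta> n \<longleftrightarrow> (\<forall>l\<in>lbox p n. \<forall>i\<in>{1..p}.
     pochhammer (\<alpha> i + 1) (\<Sum>j=i..p. l j) \<noteq> 0
     \<and> pochhammer (\<alpha> i + \<beta> + real (\<Sum>k=1..i. n k) + 1) (\<Sum>j=i+1..p. l j) \<noteq> 0)"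

lemma reduced_Ccoef_denoms_nonzero_tail:
  assumes "reduced_Ccoef_denoms_nonzero (Suc p) \<alpha> \<beta> n"
  shows "reduced_Ccoef_denoms_nonzero p (\<lambda>i. \<alpha> (Suc i)) (\<beta> + real (n 1)) (\<lambda>i. n (Suc i))"
  unfolding reduced_Ccoef_denoms_nonzero_def
proof (intro ballI)
  fix l i assume l: "l \<in> lbox p (\<lambda>i. n (Suc i))" and i: "i \<in> {1..p}"
  have "(\<Sum>j=Suc i..Suc p. index_cons 0 l j) = (\<Sum>j=i..p. l j)"
    using sum_index_cons_from[of i 0 l p] i by simp
  moreover have "(\<Sum>j=Suc i+1..Suc p. index_cons 0 l j) = (\<Sum>j=i+1..p. l j)"
    using sum_index_cons_from[of "Suc i" 0 l p] by simp
  moreover have "\<alpha> (Suc i) + \<beta> + real (\<Sum>k=1..Suc i. n k) + 1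
      = \<alpha> (Suc i) + (\<beta> + real (n 1)) + real (\<Sum>k=1..i. n (Suc k)) + 1"
    unfolding sum_atLeast1_Suc_shift by simp
  moreover have "index_cons 0 l \<in> lbox (Suc p) n" and "Suc i \<in> {1..Suc p}"
    using index_cons_mem_lbox[OF _ l] i by auto
  ultimately show "pochhammer (\<alpha> (Suc i) + 1) (\<Sum>j=i..p. l j) \<noteq> 0
      \<and> pochhammer (\<alpha> (Suc i) + (\<beta> + real (n 1)) + real (\<Sum>k=1..i. n (Suc k)) + 1) (\<Sum>j=i+1..p. l j) \<noteq> 0"
    using assms unfolding reduced_Ccoef_denoms_nonzero_def by metis
qed

lemma sum_first_index_reduced_Ccoef:
  fixes \<alpha> :: "nat \<Rightarrow> real" and n l :: "nat \<Rightarrow> nat" and \<beta> x :: real and p :: nat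
  defines "S \<equiv> \<Sum>j=1..p. l j"
  assumes l: "l \<in> lbox p (\<lambda>i. n (Suc i))"
    and x_ne: "pochhammer (x + \<beta> + 1) (\<Sum>i=1..Suc p. n i) \<noteq> 0"
    and denoms: "reduced_Ccoef_denoms_nonzero (Suc p) \<alpha> \<beta> n"
  shows "(\<Sum>a\<le>n 1. pochhammer x (\<Sum>i=1..Suc p. index_cons a l i)
            / pochhammer (x + \<beta> + 1) (\<Sum>i=1..Suc p. index_cons a l i)
            * reduced_Ccoef (Suc p) \<alpha> \<beta> n (index_cons a l))
       = pochhammer (\<beta> + 1) (n 1) * pochhammer (\<alpha> 1 - x + 1) (n 1) / pochhammer (x + \<beta> + 1) (n 1)
         * (pochhammer x S / pochhammer (x + (\<beta> + real (n 1)) + 1) S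
            * reduced_Ccoef p (\<lambda>i. \<alpha> (Suc i)) (\<beta> + real (n 1)) (\<lambda>i. n (Suc i)) l)"
    (is "?lhs = ?rhs")
proof -
  have cons_mem: "index_cons (n 1) l \<in> lbox (Suc p) n"
    using index_cons_mem_lbox[OF _ l] by simp
  have "S \<le> (\<Sum>i=1..p. n (Suc i))"
    using sum_le_of_mem_lbox[OF l] by (simp add: S_def)
  then have h1: "pochhammer (x + \<beta> + 1) (n 1 + S) \<noteq> 0"
    using x_ne pochhammer_neq_0_mono unfolding sum_atLeast1_Suc_shift by fastforce
  have h2: "pochhammer (\<alpha> 1 + 1) (n 1 + S) \<noteq> 0"
    using denoms cons_mem sum_index_cons[of "n 1" l p]
    unfolding reduced_Ccoef_denoms_nonzero_def S_def by force
  have h3: "pochhammer (\<alpha> 1 + \<beta> + real (n 1) + 1) S \<noteq> 0"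
    using denoms cons_mem sum_index_cons_from[of 1 "n 1" l p]
    unfolding reduced_Ccoef_denoms_nonzero_def S_def by force
  have "?lhs = (\<Sum>a\<le>n 1. pochhammer x (a + S) / pochhammer (x + \<beta> + 1) (a + S)
          * (pochhammer (\<alpha> 1 + 1) (n 1) * (pochhammer (- real (n 1)) a / fact a)
             * (pochhammer (\<alpha> 1 + \<beta> + real (n 1) + 1) (a + S) / pochhammer (\<alpha> 1 + 1) (a + S))
             * (pochhammer (\<alpha> 1 + real (n 1) + 1) S / pochhammer (\<alpha> 1 + \<beta> + real (n 1) + 1) S)))
        * reduced_Ccoef p (\<lambda>i. \<alpha> (Suc i)) (\<beta> + real (n 1)) (\<lambda>i. n (Suc i)) l"
    unfolding sum_distrib_right sum_index_cons reduced_Ccoef_index_cons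
    by (simp add: S_def mult.assoc)
  also have "\<dots> = ?rhs"
    unfolding pfaff_saalschutz_shifted[OF h1 h2 h3] by (simp add: add_ac mult_ac)
  finally show ?thesis .
qed

lemma sum_reduced_Ccoef:
  fixes \<alpha> :: "nat \<Rightarrow> real" and n :: "nat \<Rightarrow> nat" and \<beta> x :: real
  assumes "pochhammer (x + \<beta> + 1) (\<Sum>i=1..p. n i) \<noteq> 0"
    and "reduced_Ccoef_denoms_nonzero p \<alpha> \<beta> n"
  shows "(\<Sum>l\<in>lbox p n. pochhammer x (\<Sum>i=1..p. l i) / pochhammer (x + \<beta> + 1) (\<Sum>i=1..p. l i)
            * reduced_Ccoef p \<alpha> \<beta> n l)
       = pochhammer (\<beta> + 1) (\<Sum>i=1..p. n i) / pochhammer (x + \<beta> + 1) (\<Sum>i=1..p. n i)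
         * (\<Prod>q=1..p. pochhammer (\<alpha> q - x + 1) (n q))"
  using assms
proof (induction p arbitrary: \<alpha> \<beta> n)
  case 0
  then show ?case
    by (simp add: lbox_0 reduced_Ccoef_def)
next
  case (Suc p)
  define n' where "n' = (\<lambda>i. n (Suc i))"
  define \<alpha>' where "\<alpha>' = (\<lambda>i. \<alpha> (Suc i))"
  define \<beta>' where "\<beta>' = \<beta> + real (n 1)"
  define m' where "m' = (\<Sum>i=1..p. n' i)"
  define C where "C = pochhammer (\<beta> + 1) (n 1) * pochhammer (\<alpha> 1 - x + 1) (n 1) / pochhammer (x + \<beta> + 1) (n 1)"
  have m_Suc: "(\<Sum>i=1..Suc p. n i) = n 1 + m'"
    unfolding m'_def n'_def sum_atLeast1_Suc_shift ..
  have split_m: "pochhammer z (n 1 + m') = pochhammer z (n 1) * pochhammer (z + real (n 1)) m'" for z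
    by (rule pochhammer_product')
  have "pochhammer (x + \<beta> + 1) (n 1 + m') \<noteq> 0"
    using Suc.prems(1) m_Suc by simp
  then have "pochhammer (x + \<beta>' + 1) m' \<noteq> 0"
    using split_m[of "x + \<beta> + 1"] by (simp add: \<beta>'_def add_ac)
  then have IH: "(\<Sum>l\<in>lbox p n'. pochhammer x (\<Sum>i=1..p. l i) / pochhammer (x + \<beta>' + 1) (\<Sum>i=1..p. l i)
            * reduced_Ccoef p \<alpha>' \<beta>' n' l)
      = pochhammer (\<beta>' + 1) m' / pochhammer (x + \<beta>' + 1) m' * (\<Prod>q=1..p. pochhammer (\<alpha>' q - x + 1) (n' q))"
    using Suc.IH reduced_Ccoef_denoms_nonzero_tail[OF Suc.prems(2)]
    unfolding m'_def \<alpha>'_def \<beta>'_def n'_def by blast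
  have first_index: "(\<Sum>a\<le>n 1. pochhammer x (\<Sum>i=1..Suc p. index_cons a l i)
        / pochhammer (x + \<beta> + 1) (\<Sum>i=1..Suc p. index_cons a l i) * reduced_Ccoef (Suc p) \<alpha> \<beta> n (index_cons a l))
      = C * (pochhammer x (\<Sum>i=1..p. l i) / pochhammer (x + \<beta>' + 1) (\<Sum>i=1..p. l i) * reduced_Ccoef p \<alpha>' \<beta>' n' l)"
    if "l \<in> lbox p n'" for l
    using sum_first_index_reduced_Ccoef[OF that[unfolded n'_def] Suc.prems]
    unfolding C_def \<alpha>'_def \<beta>'_def n'_def .
  have "(\<Sum>l\<in>lbox (Suc p) n. pochhammer x (\<Sum>i=1..Suc p. l i) / pochhammer (x + \<beta> + 1) (\<Sum>i=1..Suc p. l i)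
          * reduced_Ccoef (Suc p) \<alpha> \<beta> n l)
      = C * (pochhammer (\<beta>' + 1) m' / pochhammer (x + \<beta>' + 1) m' * (\<Prod>q=1..p. pochhammer (\<alpha>' q - x + 1) (n' q)))"
    unfolding sum_lbox_Suc n'_def[symmetric] IH[symmetric] sum_distrib_left
    by (subst sum.swap) (rule sum.cong[OF refl], rule first_index)
  also have "\<dots> = pochhammer (\<beta> + 1) (\<Sum>i=1..Suc p. n i) / pochhammer (x + \<beta> + 1) (\<Sum>i=1..Suc p. n i)
         * (\<Prod>q=1..Suc p. pochhammer (\<alpha> q - x + 1) (n q))"
    unfolding m_Suc split_m prod_atLeast1_Suc_shift C_def \<alpha>'_def n'_def \<beta>'_def
    by (simp add: add_ac)
  finally show ?case .
qed

lemma pochhammer_partial_fraction: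
  fixes x \<beta> :: "'a::field"
  assumes "pochhammer (x + \<beta> + 1) L \<noteq> 0" and "pochhammer (x + \<beta> + 2) L \<noteq> 0" and "\<beta> + 1 \<noteq> 0"
  shows "pochhammer x L / pochhammer (x + \<beta> + 2) L
       = ((x + \<beta> + 1) * (pochhammer x L / pochhammer (x + \<beta> + 1) L)
          - x * (pochhammer (x + 1) L / pochhammer (x + \<beta> + 2) L)) / (\<beta> + 1)"
proof -
  have "(x + \<beta> + 1) * pochhammer (x + \<beta> + 2) L = (x + \<beta> + 1 + of_nat L) * pochhammer (x + \<beta> + 1) L"
    using pochhammer_rec[of "x + \<beta> + 1" L] pochhammer_Suc[of "x + \<beta> + 1" L] by (simp add: add_ac mult_ac)
  then have "(x + \<beta> + 1) / pochhammer (x + \<beta> + 1) L = (x + \<beta> + 1 + of_nat L) / pochhammer (x + \<beta> + 2) L"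
    using assms(1,2) by (simp add: frac_eq_eq)
  then have first: "(x + \<beta> + 1) * (pochhammer x L / pochhammer (x + \<beta> + 1) L)
      = pochhammer x L * (x + \<beta> + 1 + of_nat L) / pochhammer (x + \<beta> + 2) L"
    by (metis times_divide_eq_left times_divide_eq_right mult.commute)
  have "x * pochhammer (x + 1) L = pochhammer x L * (x + of_nat L)"
    by (metis pochhammer_rec pochhammer_Suc)
  then have second: "x * (pochhammer (x + 1) L / pochhammer (x + \<beta> + 2) L)
      = pochhammer x L * (x + of_nat L) / pochhammer (x + \<beta> + 2) L"
    by (metis times_divide_eq_right)
  have "pochhammer x L * (x + \<beta> + 1 + of_nat L) / pochhammer (x + \<beta> + 2) L
      - pochhammer x L * (x + of_nat L) / pochhammer (x + \<beta> + 2) L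
      = pochhammer x L / pochhammer (x + \<beta> + 2) L * (\<beta> + 1)"
    by (simp add: diff_divide_distrib[symmetric] algebra_simps)
  then show ?thesis
    unfolding first second using assms(3) by simp
qed

lemma partial_fraction_recombine:
  fixes x \<beta> P1 P0 :: "'a::field"
  assumes "1 \<le> m" and "\<beta> + 1 \<noteq> 0"
    and "pochhammer (x + \<beta> + 1) m \<noteq> 0" and "pochhammer (x + \<beta> + 2) m \<noteq> 0"
  shows "((x + \<beta> + 1) * (pochhammer (\<beta> + 1) m / pochhammer (x + \<beta> + 1) m * P1)
          - x * (pochhammer (\<beta> + 1) m / pochhammer (x + \<beta> + 2) m * P0)) / (\<beta> + 1)
       = pochhammer (\<beta> + 2) (m - 1) / pochhammer (x + \<beta> + 2) m * ((x + \<beta> + of_nat m + 1) * P1 - x * P0)"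
proof -
  have m_Suc: "m = Suc (m - 1)"
    using assms(1) by simp
  have \<beta>_split: "pochhammer (\<beta> + 1) m = (\<beta> + 1) * pochhammer (\<beta> + 2) (m - 1)"
    by (subst m_Suc, subst pochhammer_rec) (simp add: add_ac one_add_one)
  have "(x + \<beta> + 1) * pochhammer (x + \<beta> + 2) m = pochhammer (x + \<beta> + 1) m * (x + \<beta> + of_nat m + 1)"
    using pochhammer_Suc[of "x + \<beta> + 1" m] pochhammer_rec[of "x + \<beta> + 1" m] by (simp add: add_ac one_add_one)
  then have ratio: "(x + \<beta> + 1) / pochhammer (x + \<beta> + 1) m = (x + \<beta> + of_nat m + 1) / pochhammer (x + \<beta> + 2) m"
    using assms(3,4) by (simp add: frac_eq_eq mult_ac)
  have first: "(x + \<beta> + 1) * (pochhammer (\<beta> + 1) m / pochhammer (x + \<beta> + 1) m * P1)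
      = (x + \<beta> + of_nat m + 1) / pochhammer (x + \<beta> + 2) m * (pochhammer (\<beta> + 1) m * P1)"
    by (simp flip: ratio)
  have collect: "(d / D * (b * B * P1) - x * (b * B / D * P0)) / b = B / D * (d * P1 - x * P0)"
    if "b \<noteq> 0" "D \<noteq> 0" for b D d B :: 'a
    using that by (simp add: field_simps)
  show ?thesis
    unfolding first unfolding \<beta>_split by (rule collect[OF assms(2,4)])
qed

lemma sum_reduced_Ccoef_shifted:
  fixes \<alpha> :: "nat \<Rightarrow> real" and n :: "nat \<Rightarrow> nat" and \<beta> x :: real and p :: nat
  defines "m \<equiv> \<Sum>i=1..p. n i"
  assumes m_pos: "1 \<le> m"
    and x_ne: "pochhammer (x + \<beta> + 2) m \<noteq> 0"
    and \<beta>_ne: "\<beta> + 1 \<noteq> 0" and x\<beta>_ne: "x + \<beta> + 1 \<noteq> 0"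
    and denoms: "reduced_Ccoef_denoms_nonzero p \<alpha> \<beta> n"
  shows "(\<Sum>l\<in>lbox p n. pochhammer x (\<Sum>i=1..p. l i) / pochhammer (x + \<beta> + 2) (\<Sum>i=1..p. l i)
            * reduced_Ccoef p \<alpha> \<beta> n l)
       = pochhammer (\<beta> + 2) (m - 1) / pochhammer (x + \<beta> + 2) m
         * ((x + \<beta> + real m + 1) * (\<Prod>q=1..p. pochhammer (\<alpha> q - x + 1) (n q))
            - x * (\<Prod>q=1..p. pochhammer (\<alpha> q - x) (n q)))"
    (is "?lhs = _")
proof -
  define P1 where "P1 = (\<Prod>q=1..p. pochhammer (\<alpha> q - x + 1) (n q))"
  define P0 where "P0 = (\<Prod>q=1..p. pochhammer (\<alpha> q - x) (n q))"
  have x_ne': "pochhammer (x + \<beta> + 1) m \<noteq> 0"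
  proof -
    have "m = Suc (m - 1)"
      using m_pos by simp
    then have "pochhammer (x + \<beta> + 1) m = (x + \<beta> + 1) * pochhammer (x + \<beta> + 2) (m - 1)"
      by (metis pochhammer_rec add.assoc one_add_one)
    then show ?thesis
      using x\<beta>_ne x_ne pochhammer_neq_0_mono[of "x + \<beta> + 2" m "m - 1"] by auto
  qed
  have S1: "(\<Sum>l\<in>lbox p n. pochhammer x (\<Sum>i=1..p. l i) / pochhammer (x + \<beta> + 1) (\<Sum>i=1..p. l i)
            * reduced_Ccoef p \<alpha> \<beta> n l) = pochhammer (\<beta> + 1) m / pochhammer (x + \<beta> + 1) m * P1"
    (is "?S1 = _")
    using sum_reduced_Ccoef[OF _ denoms] x_ne' by (simp add: m_def P1_def)
  have S0: "(\<Sum>l\<in>lbox p n. pochhammer (x + 1) (\<Sum>i=1..p. l i) / pochhammer (x + \<beta> + 2) (\<Sum>i=1..p. l i)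
            * reduced_Ccoef p \<alpha> \<beta> n l) = pochhammer (\<beta> + 1) m / pochhammer (x + \<beta> + 2) m * P0"
    (is "?S0 = _")
    using sum_reduced_Ccoef[OF _ denoms, of "x + 1"] x_ne by (simp add: m_def P0_def add_ac)
  have partial_fraction: "pochhammer x L / pochhammer (x + \<beta> + 2) L
      = ((x + \<beta> + 1) * (pochhammer x L / pochhammer (x + \<beta> + 1) L)
         - x * (pochhammer (x + 1) L / pochhammer (x + \<beta> + 2) L)) / (\<beta> + 1)" if "L \<le> m" for L
  proof (rule pochhammer_partial_fraction[OF _ _ \<beta>_ne])
    show "pochhammer (x + \<beta> + 1) L \<noteq> 0" and "pochhammer (x + \<beta> + 2) L \<noteq> 0"
      using x_ne x_ne' that pochhammer_neq_0_mono by blast+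
  qed
  have "?lhs = ((x + \<beta> + 1) * ?S1 - x * ?S0) / (\<beta> + 1)"
    unfolding sum_distrib_left sum_subtractf[symmetric] sum_divide_distrib
    by (intro sum.cong refl)
      (use partial_fraction sum_le_of_mem_lbox in \<open>simp add: m_def left_diff_distrib mult.assoc\<close>)
  also have "\<dots> = ((x + \<beta> + 1) * (pochhammer (\<beta> + 1) m / pochhammer (x + \<beta> + 1) m * P1)
         - x * (pochhammer (\<beta> + 1) m / pochhammer (x + \<beta> + 2) m * P0)) / (\<beta> + 1)"
    unfolding S1 S0 ..
  also have "\<dots> = pochhammer (\<beta> + 2) (m - 1) / pochhammer (x + \<beta> + 2) m * ((x + \<beta> + real m + 1) * P1 - x * P0)"
    by (rule partial_fraction_recombine[OF m_pos \<beta>_ne x_ne' x_ne])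
  finally show ?thesis
    by (simp add: P1_def P0_def)
qed

lemma sum_Ccoef_closed_form:
  fixes p N :: nat and n :: "nat \<Rightarrow> nat" and \<alpha> :: "nat \<Rightarrow> real" and \<beta> x :: real
  assumes hn1: "absn p n \<ge> 1"
    and hden_x2: "pochhammer (x + \<beta> + 2) (absn p n) \<noteq> 0"
    and hden_N: "\<forall>l\<in>lbox p n. pochhammer (- real N) (\<Sum>i=1..p. l i) \<noteq> 0"
    and hden_c: "\<forall>l\<in>lbox p n. \<forall>i\<in>{1..p}. pochhammer (\<alpha> i + 1) (\<Sum>j=i..p. l j) \<noteq> 0"
    and hden_d: "\<forall>l\<in>lbox p n. \<forall>i\<in>{1..p-1}.
        pochhammer (\<alpha> i + \<beta> + real (\<Sum>k=1..i. n k) + 1) (\<Sum>j=i+1..p. l j) \<noteq> 0"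
    and \<beta>_ne: "\<beta> + 1 \<noteq> 0" and x\<beta>_ne: "x + \<beta> + 1 \<noteq> 0"
  shows "(\<Sum>l\<in>lbox p n.
            pochhammer (- real N) (\<Sum>i=1..p. l i) * pochhammer x (\<Sum>i=1..p. l i)
            / pochhammer (x + \<beta> + 2) (\<Sum>i=1..p. l i) * Ccoef p N \<alpha> \<beta> n l)
       = pochhammer (\<beta> + 2) (absn p n - 1) * pochhammer (- real N) (absn p n)
         / (pochhammer (x + \<beta> + 2) (absn p n)
            * (\<Prod>q=1..p. pochhammer (\<alpha> q + \<beta> + real (absn p n) + 1) (n q)))
         * ((x + \<beta> + real (absn p n) + 1) * (\<Prod>q=1..p. pochhammer (\<alpha> q - x + 1) (n q))
            - x * (\<Prod>q=1..p. pochhammer (\<alpha> q - x) (n q)))"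
proof -
  define m where "m = absn p n"
  define K where "K = pochhammer (- real N) m / (\<Prod>i=1..p. pochhammer (\<alpha> i + \<beta> + real m + 1) (n i))"
  have denoms: "reduced_Ccoef_denoms_nonzero p \<alpha> \<beta> n"
    unfolding reduced_Ccoef_denoms_nonzero_def
  proof (intro ballI conjI)
    fix l i assume "l \<in> lbox p n" and "i \<in> {1..p}"
    then show "pochhammer (\<alpha> i + 1) (\<Sum>j=i..p. l j) \<noteq> 0"
      using hden_c by blast
    show "pochhammer (\<alpha> i + \<beta> + real (\<Sum>k=1..i. n k) + 1) (\<Sum>j=i+1..p. l j) \<noteq> 0"
      using hden_d \<open>l \<in> lbox p n\<close> \<open>i \<in> {1..p}\<close> by (cases "i = p") auto
  qed
  have "(\<Sum>l\<in>lbox p n.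
            pochhammer (- real N) (\<Sum>i=1..p. l i) * pochhammer x (\<Sum>i=1..p. l i)
            / pochhammer (x + \<beta> + 2) (\<Sum>i=1..p. l i) * Ccoef p N \<alpha> \<beta> n l)
      = K * (\<Sum>l\<in>lbox p n. pochhammer x (\<Sum>i=1..p. l i) / pochhammer (x + \<beta> + 2) (\<Sum>i=1..p. l i)
            * reduced_Ccoef p \<alpha> \<beta> n l)"
    unfolding sum_distrib_left
    by (intro sum.cong refl) (use hden_N in \<open>simp add: Ccoef_eq_reduced_Ccoef K_def m_def absn_def mult_ac\<close>)
  also have "\<dots> = K * (pochhammer (\<beta> + 2) (m - 1) / pochhammer (x + \<beta> + 2) m
         * ((x + \<beta> + real m + 1) * (\<Prod>q=1..p. pochhammer (\<alpha> q - x + 1) (n q))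
            - x * (\<Prod>q=1..p. pochhammer (\<alpha> q - x) (n q))))"
    using sum_reduced_Ccoef_shifted[OF _ _ \<beta>_ne x\<beta>_ne denoms] hn1 hden_x2
    by (simp add: m_def absn_def)
  finally show ?thesis
    by (simp add: K_def m_def mult_ac)
qed

section \<open>Continuity in \<beta>\<close>

lemma eq_at_of_isCont_of_eventually_eq:
  fixes f g :: "real \<Rightarrow> real"
  assumes "isCont f a" and "isCont g a" and "\<forall>\<^sub>F b in at a. f b = g b"
  shows "f a = g a"
proof -
  have "(f \<longlongrightarrow> g a) (at a)"
    using assms(2,3) by (simp add: isCont_def tendsto_cong)
  with assms(1) show ?thesis
    by (simp add: isCont_def LIM_unique)
qed

lemma isCont_pochhammer' [continuous_intros]:
  fixes f :: "'a::t2_space \<Rightarrow> 'b::real_normed_field"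
  shows "isCont f a \<Longrightarrow> isCont (\<lambda>x. pochhammer (f x) n) a"
  by (rule isCont_o2[OF _ isCont_pochhammer])

lemma eventually_pochhammer_nonzero:
  fixes f :: "real \<Rightarrow> real"
  assumes "isCont f a" and "pochhammer (f a) k \<noteq> 0"
  shows "\<forall>\<^sub>F b in at a. pochhammer (f b) k \<noteq> 0"
  using assms(2) isCont_pochhammer'[OF assms(1), of k]
  by (simp add: isCont_def tendsto_imp_eventually_ne)

theorem mainTheorem2:
  fixes p N :: nat and n :: "nat \<Rightarrow> nat" and \<alpha> :: "nat \<Rightarrow> real" and \<beta> x :: real
  assumes hp: "p \<ge> 1"
    and hn1: "absn p n \<ge> 1"
    and hnN: "absn p n \<le> N"
    and hden_x: "\<forall>l\<in>lbox p n. pochhammer (x + \<beta> + 2) (\<Sum>i=1..p. l i) \<noteq> 0"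
    and hden_x2: "pochhammer (x + \<beta> + 2) (absn p n) \<noteq> 0"
    and hden_N: "\<forall>l\<in>lbox p n. pochhammer (- real N) (\<Sum>i=1..p. l i) \<noteq> 0"
    and hden_a: "\<forall>i\<in>{1..p}. pochhammer (\<alpha> i + \<beta> + real (absn p n) + 1) (n i) \<noteq> 0"
    and hden_b: "\<forall>l\<in>lbox p n. \<forall>i\<in>{1..p}.
        pochhammer (\<alpha> i + \<beta> + real (\<Sum>k=1..i. n k) + 1) (\<Sum>j=i..p. l j) \<noteq> 0"
    and hden_c: "\<forall>l\<in>lbox p n. \<forall>i\<in>{1..p}. pochhammer (\<alpha> i + 1) (\<Sum>j=i..p. l j) \<noteq> 0"
    and hden_d: "\<forall>l\<in>lbox p n. \<forall>i\<in>{1..p-1}.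
        pochhammer (\<alpha> i + \<beta> + real (\<Sum>k=1..i. n k) + 1) (\<Sum>j=i+1..p. l j) \<noteq> 0"
  shows "(\<Sum>l\<in>lbox p n.
            pochhammer (- real N) (\<Sum>i=1..p. l i) * pochhammer x (\<Sum>i=1..p. l i)
            / pochhammer (x + \<beta> + 2) (\<Sum>i=1..p. l i) * Ccoef p N \<alpha> \<beta> n l)
       = pochhammer (\<beta> + 2) (absn p n - 1) * pochhammer (- real N) (absn p n)
         / (pochhammer (x + \<beta> + 2) (absn p n)
            * (\<Prod>q=1..p. pochhammer (\<alpha> q + \<beta> + real (absn p n) + 1) (n q)))
         * ((x + \<beta> + real (absn p n) + 1) * (\<Prod>q=1..p. pochhammer (\<alpha> q - x + 1) (n q))
            - x * (\<Prod>q=1..p. pochhammer (\<alpha> q - x) (n q)))"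
proof -
  have nondegenerate: "\<forall>\<^sub>F b in at \<beta>. b \<noteq> -1 \<and> b \<noteq> - x - 1 \<and> pochhammer (x + b + 2) (absn p n) \<noteq> 0
      \<and> (\<forall>l\<in>lbox p n. \<forall>i\<in>{1..p-1}. pochhammer (\<alpha> i + b + real (\<Sum>k=1..i. n k) + 1) (\<Sum>j=i+1..p. l j) \<noteq> 0)"
    using hden_x2 hden_d
    by (intro eventually_conj eventually_neq_at_within eventually_ball_finite finite_lbox finite_atLeastAtMost
        ballI eventually_pochhammer_nonzero continuous_intros) auto
  show ?thesis
    apply (rule eq_at_of_isCont_of_eventually_eq[where a = \<beta>])
    subgoal
      unfolding Ccoef_def
      by (intro continuous_intros) (use hden_x hden_a hden_c hden_d in \<open>auto simp: absn_def\<close>)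
    subgoal
      by (intro continuous_intros) (use hden_x2 hden_a in \<open>auto simp: prod_zero_iff\<close>)
    subgoal
      using nondegenerate
      by (rule eventually_mono) (use sum_Ccoef_closed_form[OF hn1 _ hden_N hden_c] in force)
    done
qed

end
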